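(* Let $x\in M_1$ be ap-chain recurrent. Then $\overline{[x]_{ap}}\subset M_0\cup[x]_{ap}$. In particular, if $\overline{[x]_{ap}}\subset M_1$ then $[x]_{ap}$ is closed.
   Context: Let $M\subset\mathbb{R}^d$ be closed (topology relative to $M$). Let $F:M\to M$ be continuous with $\sup_{x\in M}\|F(x)\|<\infty$. Let $d(x,y)=\max_i|x_i-y_i|$. Suppose $M=M_0\cup M_1$ (disjoint) with $M_0$ closed, $F(M_0)\subseteq M_0$ and $F(M_1)\subseteq M_1$. ap-chain recurrence. For $\delta>0$, an ap $\delta$-pseudoorbit joining $x$ to $y$ is a tuple $(\xi_0,\dots,\xi_n)\in M^{n+1}$, $n\ge1$, with: - $\xi_0=x$ and $\xi_n=y$; - $\xi_i\in M_0\Rightarrow\xi_{i+1}\in M_0$; - $d(\xi_{i+1},F(\xi_i))<\delta$ for all $i$. Write $x<_{ap}y$ if for every $\delta>0$ such a pseudoorbit exists, and $x\sim_{ap}y$ if $x<_{ap}y$ and $y<_{ap}x$. A point $x$ is ap-chain recurrent if $x\sim_{ap}x$. The set of such points is $\mathcal{R}_{ap}$. The ap-basic class $[x]_{ap}$ of $x\in\mathcal{R}_{ap}$ is its equivalence class under $\sim_{ap}$ restricted to $\mathcal{R}_{ap}$. *)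

theory Defs
  imports "HOL-Analysis.Analysis"
begin

text \<open>Points of R^d are vectors of type real^'n (d = CARD('n)).
  The metric d(x,y) = max_i |x_i - y_i|.\<close>
definition maxdist :: "real^'n \<Rightarrow> real^'n \<Rightarrow> real" where
  "maxdist x y = Max (range (\<lambda>i. \<bar>x$i - y$i\<bar>))"

definition ap_pseudoorbit ::
  "(real^'n) set \<Rightarrow> (real^'n \<Rightarrow> real^'n) \<Rightarrow> (real^'n) set \<Rightarrow> real
    \<Rightarrow> real^'n \<Rightarrow> real^'n \<Rightarrow> (nat \<Rightarrow> real^'n) \<Rightarrow> nat \<Rightarrow> bool" where
  "ap_pseudoorbit M F M0 \<delta> x y \<xi> n \<longleftrightarrow>
     n \<ge> 1 \<and> (\<forall>i\<le>n. \<xi> i \<in> M) \<and> \<xi> 0 = x \<and> \<xi> n = y \<and>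
     (\<forall>i<n. \<xi> i \<in> M0 \<longrightarrow> \<xi> (Suc i) \<in> M0) \<and>
     (\<forall>i<n. maxdist (\<xi> (Suc i)) (F (\<xi> i)) < \<delta>)"

definition ap_less ::
  "(real^'n) set \<Rightarrow> (real^'n \<Rightarrow> real^'n) \<Rightarrow> (real^'n) set \<Rightarrow> real^'n \<Rightarrow> real^'n \<Rightarrow> bool" where
  "ap_less M F M0 x y \<longleftrightarrow> (\<forall>\<delta>>0. \<exists>\<xi> n. ap_pseudoorbit M F M0 \<delta> x y \<xi> n)"

definition ap_equiv ::
  "(real^'n) set \<Rightarrow> (real^'n \<Rightarrow> real^'n) \<Rightarrow> (real^'n) set \<Rightarrow> real^'n \<Rightarrow> real^'n \<Rightarrow> bool" where
  "ap_equiv M F M0 x y \<longleftrightarrow> ap_less M F M0 x y \<and> ap_less M F M0 y x"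

definition R_ap ::
  "(real^'n) set \<Rightarrow> (real^'n \<Rightarrow> real^'n) \<Rightarrow> (real^'n) set \<Rightarrow> (real^'n) set" where
  "R_ap M F M0 = {x \<in> M. ap_equiv M F M0 x x}"

definition ap_class ::
  "(real^'n) set \<Rightarrow> (real^'n \<Rightarrow> real^'n) \<Rightarrow> (real^'n) set \<Rightarrow> real^'n \<Rightarrow> (real^'n) set" where
  "ap_class M F M0 x = {y \<in> R_ap M F M0. ap_equiv M F M0 x y}"

end

theory Submission
  imports Defs
begin

(* Let C = [x]_ap and let y be a point of the closure of C outside M0.
   Since M0 is closed, points z of C close to y also lie outside M0, so the
   invariance constraint of ap pseudo-orbits never forbids replacing such a z by y:
   - replacing the last point z of a pseudo-orbit from x to z by y gives a
     pseudo-orbit from x to y, at the cost of the jump maxdist y z;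
   - replacing the first point z of a pseudo-orbit from z to x by y gives one from
     y to x, at the cost of maxdist (F z) (F y), small by continuity of F.
   Hence x <_ap y and y <_ap x, so y ~_ap y by transitivity, and y is in C. *)

lemma component_le_maxdist: "\<bar>a$i - b$i\<bar> \<le> maxdist a b"
  unfolding maxdist_def by (rule Max_ge) auto

lemma maxdist_le: "(\<And>i. \<bar>a$i - b$i\<bar> \<le> K) \<Longrightarrow> maxdist a b \<le> K"
  unfolding maxdist_def by (subst Max_le_iff) auto

lemma maxdist_triangle: "maxdist a c \<le> maxdist a b + maxdist b c"
proof (rule maxdist_le)
  fix i
  have "\<bar>a$i - c$i\<bar> \<le> \<bar>a$i - b$i\<bar> + \<bar>b$i - c$i\<bar>" by simp
  also have "\<dots> \<le> maxdist a b + maxdist b c"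
    using component_le_maxdist[of a i b] component_le_maxdist[of b i c] by simp
  finally show "\<bar>a$i - c$i\<bar> \<le> maxdist a b + maxdist b c" .
qed

(* The max-metric is dominated by the Euclidean one, so Euclidean closeness suffices. *)
lemma maxdist_le_dist: "maxdist a b \<le> dist a b"
proof (rule maxdist_le)
  fix i
  show "\<bar>a$i - b$i\<bar> \<le> dist a b"
    using component_le_norm_cart[of "a - b" i] by (simp add: dist_norm)
qed

lemma maxdist_nonneg: "0 \<le> maxdist a b"
  using component_le_maxdist[of a undefined b] by linarith

(* Transitivity of <_ap: concatenate the two pseudo-orbits. *)
lemma ap_less_trans:
  assumes "ap_less M F M0 a b" "ap_less M F M0 b c"
  shows "ap_less M F M0 a c"
  unfolding ap_less_def
proof (intro allI impI)
  fix \<delta> :: real assume "\<delta> > 0"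
  then obtain \<xi> n \<eta> m where xi: "ap_pseudoorbit M F M0 \<delta> a b \<xi> n"
    and eta: "ap_pseudoorbit M F M0 \<delta> b c \<eta> m"
    using assms unfolding ap_less_def by blast
  define \<zeta> where "\<zeta> i = (if i \<le> n then \<xi> i else \<eta> (i - n))" for i
  have second_half: "\<zeta> i = \<eta> (i - n)" if "i \<ge> n" for i
    using xi eta that unfolding \<zeta>_def ap_pseudoorbit_def by auto
  have shifted_step: "\<zeta> i = \<eta> (i - n) \<and> \<zeta> (Suc i) = \<eta> (Suc (i - n)) \<and> i - n < m"
    if "\<not> i < n" "i < n + m" for i
    using second_half[of i] second_half[of "Suc i"] that by (auto simp: Suc_diff_le)
  have "ap_pseudoorbit M F M0 \<delta> a c \<zeta> (n + m)"
    unfolding ap_pseudoorbit_def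
  proof (intro conjI allI impI)
    show "1 \<le> n + m" "\<zeta> 0 = a"
      using xi unfolding ap_pseudoorbit_def \<zeta>_def by auto
    show "\<zeta> (n + m) = c" using eta second_half[of "n + m"] unfolding ap_pseudoorbit_def by auto
  next
    fix i assume "i \<le> n + m"
    then show "\<zeta> i \<in> M"
      using xi eta second_half[of i] unfolding ap_pseudoorbit_def \<zeta>_def by (cases "i \<le> n") auto
  next
    fix i assume "i < n + m" "\<zeta> i \<in> M0"
    then show "\<zeta> (Suc i) \<in> M0"
      using xi eta shifted_step[of i] unfolding ap_pseudoorbit_def \<zeta>_def by (cases "i < n") auto
  next
    fix i assume "i < n + m"
    then show "maxdist (\<zeta> (Suc i)) (F (\<zeta> i)) < \<delta>"
      using xi eta shifted_step[of i] unfolding ap_pseudoorbit_def \<zeta>_def by (cases "i < n") auto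
  qed
  then show "\<exists>\<xi> n. ap_pseudoorbit M F M0 \<delta> a c \<xi> n" by blast
qed

lemma ap_pseudoorbit_replace_last:
  assumes xi: "ap_pseudoorbit M F M0 \<epsilon> x z \<xi> n"
    and "y \<in> M" and "z \<in> M0 \<Longrightarrow> y \<in> M0" and "\<epsilon> + maxdist y z \<le> \<delta>"
  shows "ap_pseudoorbit M F M0 \<delta> x y (\<xi>(n := y)) n"
  unfolding ap_pseudoorbit_def
proof (intro conjI allI impI)
  show "1 \<le> n" "(\<xi>(n := y)) 0 = x" "(\<xi>(n := y)) n = y"
    using xi unfolding ap_pseudoorbit_def by auto
next
  fix i assume "i \<le> n"
  then show "(\<xi>(n := y)) i \<in> M" using assms(2) xi unfolding ap_pseudoorbit_def by auto
next
  fix i assume "i < n" "(\<xi>(n := y)) i \<in> M0"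
  then show "(\<xi>(n := y)) (Suc i) \<in> M0"
    using assms(3) xi unfolding ap_pseudoorbit_def by (cases "Suc i = n") auto
next
  fix i assume i: "i < n"
  have step: "maxdist (\<xi> (Suc i)) (F (\<xi> i)) < \<epsilon>" using xi i unfolding ap_pseudoorbit_def by auto
  show "maxdist ((\<xi>(n := y)) (Suc i)) (F ((\<xi>(n := y)) i)) < \<delta>"
  proof (cases "Suc i = n")
    case True
    then have "maxdist y (F (\<xi> i)) < \<epsilon> + maxdist y z"
      using step xi maxdist_triangle[of y "F (\<xi> i)" z] unfolding ap_pseudoorbit_def by auto
    then show ?thesis using True assms(4) by auto
  next
    case False
    then show ?thesis using i step assms(4) maxdist_nonneg[of y z] by auto
  qed
qed

lemma ap_pseudoorbit_replace_first:
  assumes xi: "ap_pseudoorbit M F M0 \<epsilon> z x \<xi> n"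
    and "y \<in> M" and "y \<in> M0 \<Longrightarrow> z \<in> M0" and "\<epsilon> + maxdist (F z) (F y) \<le> \<delta>"
  shows "ap_pseudoorbit M F M0 \<delta> y x (\<xi>(0 := y)) n"
  unfolding ap_pseudoorbit_def
proof (intro conjI allI impI)
  show "1 \<le> n" "(\<xi>(0 := y)) 0 = y" "(\<xi>(0 := y)) n = x"
    using xi unfolding ap_pseudoorbit_def by auto
next
  fix i assume "i \<le> n"
  then show "(\<xi>(0 := y)) i \<in> M" using assms(2) xi unfolding ap_pseudoorbit_def by auto
next
  fix i assume "i < n" "(\<xi>(0 := y)) i \<in> M0"
  then show "(\<xi>(0 := y)) (Suc i) \<in> M0"
    using assms(3) xi unfolding ap_pseudoorbit_def by (cases "i = 0") auto
next
  fix i assume i: "i < n"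
  have step: "maxdist (\<xi> (Suc i)) (F (\<xi> i)) < \<epsilon>" using xi i unfolding ap_pseudoorbit_def by auto
  show "maxdist ((\<xi>(0 := y)) (Suc i)) (F ((\<xi>(0 := y)) i)) < \<delta>"
  proof (cases "i = 0")
    case True
    then have "maxdist (\<xi> 1) (F y) < \<epsilon> + maxdist (F z) (F y)"
      using step xi maxdist_triangle[of "\<xi> 1" "F y" "F z"] unfolding ap_pseudoorbit_def by auto
    then show ?thesis using True assms(4) by auto
  next
    case False
    then show ?thesis using i step assms(4) maxdist_nonneg[of "F z" "F y"] by auto
  qed
qed

lemma ap_less_closure_target:
  assumes "closed M0" and y: "y \<in> M" "y \<notin> M0" "y \<in> closure S"
    and reach: "\<And>z. z \<in> S \<Longrightarrow> ap_less M F M0 x z"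
  shows "ap_less M F M0 x y"
  unfolding ap_less_def
proof (intro allI impI)
  fix \<delta> :: real assume "\<delta> > 0"
  obtain e0 where "e0 > 0" and off_M0: "\<And>w. dist w y < e0 \<Longrightarrow> w \<notin> M0"
    using assms(1) y(2) unfolding closed_def open_dist by (metis ComplD ComplI dist_commute)
  then obtain z where z: "z \<in> S" "dist z y < e0" "dist z y < \<delta>/2"
    using y(3) closure_approachable[of y S] \<open>\<delta> > 0\<close>
    by (metis half_gt_zero min_less_iff_conj)
  obtain \<xi> n where "ap_pseudoorbit M F M0 (\<delta>/2) x z \<xi> n"
    using reach[OF z(1)] \<open>\<delta> > 0\<close> unfolding ap_less_def by (meson half_gt_zero)
  moreover have "maxdist y z < \<delta>/2"
    using maxdist_le_dist[of y z] z(3) by (simp add: dist_commute)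
  ultimately have "ap_pseudoorbit M F M0 \<delta> x y (\<xi>(n := y)) n"
    using off_M0[OF z(2)] y(1) by (intro ap_pseudoorbit_replace_last[where z = z]) auto
  then show "\<exists>\<xi> n. ap_pseudoorbit M F M0 \<delta> x y \<xi> n" by blast
qed

lemma ap_less_closure_source:
  assumes "continuous_on M F" "S \<subseteq> M" and y: "y \<in> M" "y \<notin> M0" "y \<in> closure S"
    and reach: "\<And>z. z \<in> S \<Longrightarrow> ap_less M F M0 z x"
  shows "ap_less M F M0 y x"
  unfolding ap_less_def
proof (intro allI impI)
  fix \<delta> :: real assume "\<delta> > 0"
  obtain e1 where "e1 > 0"
    and F_close: "\<And>w. w \<in> M \<Longrightarrow> dist w y < e1 \<Longrightarrow> dist (F w) (F y) < \<delta>/2"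
    using assms(1) y(1) \<open>\<delta> > 0\<close> unfolding continuous_on_iff by (meson half_gt_zero)
  then obtain z where z: "z \<in> S" "dist z y < e1"
    using y(3) closure_approachable[of y S] by blast
  obtain \<xi> n where "ap_pseudoorbit M F M0 (\<delta>/2) z x \<xi> n"
    using reach[OF z(1)] \<open>\<delta> > 0\<close> unfolding ap_less_def by (meson half_gt_zero)
  moreover have "maxdist (F z) (F y) < \<delta>/2"
    using maxdist_le_dist[of "F z" "F y"] F_close[OF _ z(2)] z(1) assms(2) by force
  ultimately have "ap_pseudoorbit M F M0 \<delta> y x (\<xi>(0 := y)) n"
    using y(1,2) by (intro ap_pseudoorbit_replace_first[where z = z]) auto
  then show "\<exists>\<xi> n. ap_pseudoorbit M F M0 \<delta> y x \<xi> n" by blast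
qed

lemma closure_ap_class_subset:
  assumes "closed M" "closed M0" "continuous_on M F"
  shows "closure (ap_class M F M0 x) \<subseteq> M0 \<union> ap_class M F M0 x"
proof
  let ?C = "ap_class M F M0 x"
  fix y assume y: "y \<in> closure ?C"
  have C_in_M: "?C \<subseteq> M" unfolding ap_class_def R_ap_def by auto
  then have "y \<in> M" using y assms(1) closure_minimal by blast
  show "y \<in> M0 \<union> ?C"
  proof (cases "y \<in> M0")
    case False
    have "ap_less M F M0 x y"
      using ap_less_closure_target[OF assms(2) \<open>y \<in> M\<close> False y]
      unfolding ap_class_def ap_equiv_def by blast
    moreover have "ap_less M F M0 y x"
      using ap_less_closure_source[OF assms(3) C_in_M \<open>y \<in> M\<close> False y]
      unfolding ap_class_def ap_equiv_def by blast
    ultimately show ?thesis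
      using \<open>y \<in> M\<close> ap_less_trans
      unfolding ap_class_def R_ap_def ap_equiv_def by blast
  qed simp
qed

theorem mainTheorem3:
  fixes M M0 M1 :: "(real^'n) set" and F :: "real^'n \<Rightarrow> real^'n" and x :: "real^'n"
  assumes "closed M"
    and "continuous_on M F" and "F ` M \<subseteq> M" and "bounded (F ` M)"
    and "M = M0 \<union> M1" and "M0 \<inter> M1 = {}" and "closed M0"
    and "F ` M0 \<subseteq> M0" and "F ` M1 \<subseteq> M1"
    and "x \<in> M1" and "x \<in> R_ap M F M0"
  shows "closure (ap_class M F M0 x) \<subseteq> M0 \<union> ap_class M F M0 x
    \<and> (closure (ap_class M F M0 x) \<subseteq> M1 \<longrightarrow> closed (ap_class M F M0 x))"
proof -
  have accum: "closure (ap_class M F M0 x) \<subseteq> M0 \<union> ap_class M F M0 x"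
    using closure_ap_class_subset assms(1,2,7) by blast
  moreover have "closed (ap_class M F M0 x)" if "closure (ap_class M F M0 x) \<subseteq> M1"
    using accum that assms(6) closure_subset_eq by blast
  ultimately show ?thesis by blast
qed

end
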